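(* (Soundness.) Every branch that is refutable in the tableau calculus $\mathcal{T}$ described in the context is unsatisfiable.
   Context: Types: there is a countable set of base types, among them a distinguished base type $o$; the other base types are sorts ($\alpha$ ranges over sorts). Every base type is a type, and if $\sigma,\tau$ are types then $\sigma\tau$ is a type (functions from $\sigma$ to $\tau$; $\sigma\tau\mu=\sigma(\tau\mu)$). Countably many names, each with a unique type, infinitely many of each type. Terms: names; $st:\mu$ if $s:\tau\mu,t:\tau$; $\lambda x.t:\sigma\tau$ if $x:\sigma$ name, $t:\tau$. Logical constants: $\neg:oo$ and $=_\sigma:\sigma\sigma o$ for each type $\sigma$; other names are variables. Formulas are terms of type $o$; $s=_\sigma t$ is $(=_\sigma s)t$, $s\neq_\sigma t$ is $\neg(s=_\sigma t)$. Semantics: a frame $\mathcal{D}$ maps each type to a nonempty set with $\mathcal{D}(\sigma\tau)\subseteq(\mathcal{D}\sigma\to\mathcal{D}\tau)$. An assignment $\mathcal{I}$ into $\mathcal{D}$ extends $\mathcal{D}$ and maps each name $x:\sigma$ into $\mathcal{D}\sigma$; $\mathcal{I}^x_a$ is the update at $x$. Partial evaluation: $\hat{\mathcal{I}}x=\mathcal{I}x$; $\hat{\mathcal{I}}(st)=(\hat{\mathcal{I}}s)(\hat{\mathcal{I}}t)$ when both defined; $\hat{\mathcal{I}}(\lambda x.s)=f$ if $f\in\mathcal{D}(\sigma\tau)$ and $\widehat{\mathcal{I}^x_a}s=fa$ for all $a\in\mathcal{D}\sigma$. An interpretation is an assignment with total evaluation. Logical: $\mathcal{I}o=\{0,1\}$,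 $\mathcal{I}(\neg)$ negation, $\mathcal{I}(=_\sigma)$ identity. A model of a set $A$ of formulas is a logical interpretation with $\hat{\mathcal{I}}s=1$ for all $s\in A$; satisfiable = has a model. Normalization: fixed type-preserving total $[\cdot]$ on terms; $s$ normal iff $[s]=s$; (N1) $[[s]]=[s]$; (N2) $[[s]t]=[st]$; (N3) $[xs_1\dots s_n]=x[s_1]\dots[s_n]$ for a name $x$, $n\ge0$, $xs_1\dots s_n$ of base type; (N4) $\hat{\mathcal{I}}[s]=\hat{\mathcal{I}}s$ for every interpretation. Tableau calculus $\mathcal{T}$: a branch is a set of normal formulas. A rule instance $A/A_1\dots A_n$: $A$ a finite branch containing the premises, $A_i=A\cup$(formulas of the $i$-th alternative). Rules ($x$ a variable): (DN) $\neg\neg s$ / $s$. (BQ) $s=_ot$ / $\{s,t\}\mid\{\neg s,\neg t\}$. (BE) $s\neq_o t$ / $\{s,\neg t\}\mid\{\neg s,t\}$. (FQ) $s=_{\sigma\tau}t$ / $[su]=[tu]$, $u:\sigma$ normal. (FE) $s\neq_{\sigma\tau}t$ / $[sx]\neq[tx]$, $x:\sigma$ not free in $A$. (Mat) $xs_1\dots s_n,\neg xt_1\dots t_n$ / $s_1\neq t_1\mid\dots\mid s_n\neq t_n$ ($n\ge 0$). (Dec) $xs_1\dots s_n\neq_\alpha xt_1\dots t_n$ / $s_1\neq t_1\mid\dots\mid s_n\neq t_n$ ($n\ge0$). (Con) $s=_\alpha t,u\neq_\alpha v$ / $\{s\neq u,t\neq u\}\mid\{s\neq v,t\neq v\}$.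 $A$ is closed if $x,\neg x\in A$ for a variable $x:o$ or $x\neq_\alpha x\in A$ for a variable $x:\alpha$. Restrictions: (1) instances with $A$ closed are admitted only for Mat or Dec with $n=0$; (2) FE on $s\neq t\in A$ only if no variable $x$ has $[sx]\neq[tx]\in A$. Refutable branches: least set such that if $A/A_1\dots A_n$ is an admitted instance and all $A_i$ are refutable, then $A$ is refutable. *)

theory Defs
  imports Main
begin

text \<open>Base types are indexed by naturals; Base 0 is the distinguished type o,
  all other base types are sorts.\<close>
datatype ty = Base nat | Fun ty ty

abbreviation Ob :: ty where "Ob \<equiv> Base 0"

definition is_sort :: "ty \<Rightarrow> bool" where
  "is_sort t \<longleftrightarrow> (\<exists>n. n \<noteq> 0 \<and> t = Base n)"

datatype name = Vr nat ty | Neg | EqN ty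

fun nty :: "name \<Rightarrow> ty" where
  "nty (Vr n s) = s"
| "nty Neg = Fun Ob Ob"
| "nty (EqN s) = Fun s (Fun s Ob)"

definition is_var :: "name \<Rightarrow> bool" where
  "is_var x \<longleftrightarrow> (\<exists>n s. x = Vr n s)"

datatype tm = Nm name | App tm tm | Lam name tm

text \<open>Typing (None = not a well-typed term).\<close>
fun tyof :: "tm \<Rightarrow> ty option" where
  "tyof (Nm x) = Some (nty x)"
| "tyof (App s t) = (case tyof s of
      Some (Fun a b) \<Rightarrow> (if tyof t = Some a then Some b else None)
    | _ \<Rightarrow> None)"
| "tyof (Lam x s) = map_option (Fun (nty x)) (tyof s)"

fun frees :: "tm \<Rightarrow> name set" where
  "frees (Nm x) = {x}"
| "frees (App s t) = frees s \<union> frees t"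
| "frees (Lam x s) = frees s - {x}"

definition neg :: "tm \<Rightarrow> tm" where
  "neg s = App (Nm Neg) s"

definition eq :: "ty \<Rightarrow> tm \<Rightarrow> tm \<Rightarrow> tm" where
  "eq s a b = App (App (Nm (EqN s)) a) b"

definition neq :: "ty \<Rightarrow> tm \<Rightarrow> tm \<Rightarrow> tm" where
  "neq s a b = neg (eq s a b)"

definition apps :: "tm \<Rightarrow> tm list \<Rightarrow> tm" where
  "apps h ss = foldl App h ss"

text \<open>This encodes
  D(st) \<subseteq> (D s \<rightarrow> D t) over an arbitrary value type 'v.\<close>
record 'v frame =
  D :: "ty \<Rightarrow> 'v set"
  ap :: "'v \<Rightarrow> 'v \<Rightarrow> 'v"

definition is_frame :: "'v frame \<Rightarrow> bool" where
  "is_frame F \<longleftrightarrow>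
     (\<forall>s. D F s \<noteq> {}) \<and>
     (\<forall>s t f a. f \<in> D F (Fun s t) \<longrightarrow> a \<in> D F s \<longrightarrow> ap F f a \<in> D F t) \<and>
     (\<forall>s t f g. f \<in> D F (Fun s t) \<longrightarrow> g \<in> D F (Fun s t) \<longrightarrow>
        (\<forall>a \<in> D F s. ap F f a = ap F g a) \<longrightarrow> f = g)"

definition is_asg :: "'v frame \<Rightarrow> (name \<Rightarrow> 'v) \<Rightarrow> bool" where
  "is_asg F I \<longleftrightarrow> is_frame F \<and> (\<forall>x. I x \<in> D F (nty x))"

primrec eval :: "tm \<Rightarrow> 'v frame \<Rightarrow> (name \<Rightarrow> 'v) \<Rightarrow> 'v option" where
  "eval (Nm x) F I = Some (I x)"
| "eval (App s t) F I = (case (eval s F I, eval t F I) of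
      (Some f, Some a) \<Rightarrow> Some (ap F f a)
    | _ \<Rightarrow> None)"
| "eval (Lam x s) F I = (case tyof s of
      None \<Rightarrow> None
    | Some t \<Rightarrow>
        (if \<exists>f \<in> D F (Fun (nty x) t). \<forall>a \<in> D F (nty x). eval s F (I(x := a)) = Some (ap F f a)
         then Some (THE f. f \<in> D F (Fun (nty x) t) \<and>
                    (\<forall>a \<in> D F (nty x). eval s F (I(x := a)) = Some (ap F f a)))
         else None))"

definition interp :: "'v frame \<Rightarrow> (name \<Rightarrow> 'v) \<Rightarrow> bool" where
  "interp F I \<longleftrightarrow> is_asg F I \<and> (\<forall>t s. tyof t = Some s \<longrightarrow> eval t F I \<noteq> None)"

text \<open>Logical interpretation; T and Fa play the roles of the truth values 1 and 0.\<close>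
definition logical :: "'v frame \<Rightarrow> (name \<Rightarrow> 'v) \<Rightarrow> 'v \<Rightarrow> 'v \<Rightarrow> bool" where
  "logical F I T Fa \<longleftrightarrow> interp F I \<and> T \<noteq> Fa \<and> D F Ob = {T, Fa} \<and>
     ap F (I Neg) T = Fa \<and> ap F (I Neg) Fa = T \<and>
     (\<forall>s. \<forall>a \<in> D F s. \<forall>b \<in> D F s. ap F (ap F (I (EqN s)) a) b = (if a = b then T else Fa))"

definition model :: "'v frame \<Rightarrow> (name \<Rightarrow> 'v) \<Rightarrow> 'v \<Rightarrow> 'v \<Rightarrow> tm set \<Rightarrow> bool" where
  "model F I T Fa A \<longleftrightarrow> logical F I T Fa \<and> (\<forall>s \<in> A. eval s F I = Some T)"

definition satisfiable :: "'v itself \<Rightarrow> tm set \<Rightarrow> bool" where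
  "satisfiable _ A \<longleftrightarrow> (\<exists>(F :: 'v frame) I T Fa. model F I T Fa A)"

definition is_normalizer :: "'v itself \<Rightarrow> (tm \<Rightarrow> tm) \<Rightarrow> bool" where
  "is_normalizer _ nf \<longleftrightarrow>
     (\<forall>s. tyof s \<noteq> None \<longrightarrow> tyof (nf s) = tyof s) \<and>
     (\<forall>s. tyof s \<noteq> None \<longrightarrow> nf (nf s) = nf s) \<and>
     (\<forall>s t. tyof (App s t) \<noteq> None \<longrightarrow> nf (App (nf s) t) = nf (App s t)) \<and>
     (\<forall>x ss b. tyof (apps (Nm x) ss) = Some (Base b) \<longrightarrow>
        nf (apps (Nm x) ss) = apps (Nm x) (map nf ss)) \<and>
     (\<forall>(F :: 'v frame) I s. interp F I \<longrightarrow> tyof s \<noteq> None \<longrightarrow> eval (nf s) F I = eval s F I)"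

definition normal_formula :: "(tm \<Rightarrow> tm) \<Rightarrow> tm \<Rightarrow> bool" where
  "normal_formula nf s \<longleftrightarrow> tyof s = Some Ob \<and> nf s = s"

definition branch :: "(tm \<Rightarrow> tm) \<Rightarrow> tm set \<Rightarrow> bool" where
  "branch nf A \<longleftrightarrow> (\<forall>s \<in> A. normal_formula nf s)"

definition closed :: "tm set \<Rightarrow> bool" where
  "closed A \<longleftrightarrow>
     (\<exists>n. Nm (Vr n Ob) \<in> A \<and> neg (Nm (Vr n Ob)) \<in> A) \<or>
     (\<exists>n a. is_sort a \<and> neq a (Nm (Vr n a)) (Nm (Vr n a)) \<in> A)"

definition frees_set :: "tm set \<Rightarrow> name set" where
  "frees_set A = (\<Union>s \<in> A. frees s)"

text \<open>Admitted rule instances A / A \<union> K1 ... A \<union> Kn, given by the list [K1,...,Kn]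
  of the formulas added in each alternative (restrictions (1) and (2) built in).\<close>
inductive inst :: "(tm \<Rightarrow> tm) \<Rightarrow> tm set \<Rightarrow> tm set list \<Rightarrow> bool" for nf where
  DN: "\<not> closed A \<Longrightarrow> neg (neg s) \<in> A \<Longrightarrow> inst nf A [{s}]"
| BQ: "\<not> closed A \<Longrightarrow> eq Ob s t \<in> A \<Longrightarrow> inst nf A [{s, t}, {neg s, neg t}]"
| BE: "\<not> closed A \<Longrightarrow> neq Ob s t \<in> A \<Longrightarrow> inst nf A [{s, neg t}, {neg s, t}]"
| FQ: "\<not> closed A \<Longrightarrow> eq (Fun a b) s t \<in> A \<Longrightarrow> tyof u = Some a \<Longrightarrow> nf u = u \<Longrightarrow>
       inst nf A [{eq b (nf (App s u)) (nf (App t u))}]"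
| FE: "\<not> closed A \<Longrightarrow> neq (Fun a b) s t \<in> A \<Longrightarrow> Vr n a \<notin> frees_set A \<Longrightarrow>
       \<not> (\<exists>m. neq b (nf (App s (Nm (Vr m a)))) (nf (App t (Nm (Vr m a)))) \<in> A) \<Longrightarrow>
       inst nf A [{neq b (nf (App s (Nm (Vr n a)))) (nf (App t (Nm (Vr n a))))}]"
| Mat: "(ss \<noteq> [] \<longrightarrow> \<not> closed A) \<Longrightarrow> is_var x \<Longrightarrow> length ss = length ts \<Longrightarrow>
       apps (Nm x) ss \<in> A \<Longrightarrow> neg (apps (Nm x) ts) \<in> A \<Longrightarrow>
       inst nf A (map2 (\<lambda>s t. {neq (the (tyof s)) s t}) ss ts)"
| Dec: "(ss \<noteq> [] \<longrightarrow> \<not> closed A) \<Longrightarrow> is_var x \<Longrightarrow> is_sort a \<Longrightarrow> length ss = length ts \<Longrightarrow>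
       neq a (apps (Nm x) ss) (apps (Nm x) ts) \<in> A \<Longrightarrow>
       inst nf A (map2 (\<lambda>s t. {neq (the (tyof s)) s t}) ss ts)"
| Con: "\<not> closed A \<Longrightarrow> is_sort a \<Longrightarrow> eq a s t \<in> A \<Longrightarrow> neq a u v \<in> A \<Longrightarrow>
       inst nf A [{neq a s u, neq a t u}, {neq a s v, neq a t v}]"

inductive refutable :: "(tm \<Rightarrow> tm) \<Rightarrow> tm set \<Rightarrow> bool" for nf where
  "finite A \<Longrightarrow> branch nf A \<Longrightarrow> inst nf A Ks \<Longrightarrow>
   (\<forall>K \<in> set Ks. refutable nf (A \<union> K)) \<Longrightarrow> refutable nf A"

end

(* A refutation is a finite tree of admitted rule instances whose leaves are instances
   without alternatives (Mat or Dec with n = 0), so it suffices that every admitted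
   instance A / A_1 ... A_n turns a model of A into a model of some A_i.  For all rules
   except FE the same interpretation works, by case analysis on the truth values of the
   premises, with N4 evaluating normalized conclusions as the unnormalized terms.  For FE,
   extensionality of the frame gives an argument c on which the values of s and t
   differ, and reassigning the fresh variable x to c keeps the formulas of A true. *)

theory Submission
  imports Defs
begin

lemma tyof_App_Some_iff:
  "tyof (App s t) = Some b \<longleftrightarrow> (\<exists>a. tyof s = Some (Fun a b) \<and> tyof t = Some a)"
  by (auto split: option.splits ty.splits if_splits)

lemma tyof_neg_Some_iff: "tyof (neg s) = Some r \<longleftrightarrow> tyof s = Some Ob \<and> r = Ob"
  by (auto simp: neg_def tyof_App_Some_iff)

lemma tyof_eq_Some_iff:
  "tyof (eq \<sigma> a b) = Some r \<longleftrightarrow> tyof a = Some \<sigma> \<and> tyof b = Some \<sigma> \<and> r = Ob"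
  by (auto simp: eq_def tyof_App_Some_iff)

lemma tyof_neq_Some_iff:
  "tyof (neq \<sigma> a b) = Some r \<longleftrightarrow> tyof a = Some \<sigma> \<and> tyof b = Some \<sigma> \<and> r = Ob"
  by (auto simp: neq_def tyof_neg_Some_iff tyof_eq_Some_iff)

lemma apps_Cons: "apps h (s # ss) = apps (App h s) ss"
  by (simp add: apps_def)

lemma tyof_apps_head: "tyof (apps h ss) \<noteq> None \<Longrightarrow> tyof h \<noteq> None"
proof (induction ss arbitrary: h)
  case Nil
  then show ?case by (simp add: apps_def)
next
  case (Cons s ss)
  then show ?case by (metis apps_Cons not_Some_eq tyof_App_Some_iff)
qed

lemma tyof_apps_args:
  assumes "tyof (apps h ss) \<noteq> None" and "tyof (apps h' ts) \<noteq> None"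
    and "tyof h = tyof h'" and "length ss = length ts"
  shows "list_all2 (\<lambda>s t. tyof s \<noteq> None \<and> tyof s = tyof t) ss ts"
  using assms
proof (induction ss arbitrary: h h' ts)
  case Nil
  then show ?case by simp
next
  case (Cons s ss)
  then obtain t ts' where ts: "ts = t # ts'" by (cases ts) auto
  have args: "tyof (apps (App h s) ss) \<noteq> None" "tyof (apps (App h' t) ts') \<noteq> None"
    using Cons.prems(1,2) ts by (simp_all add: apps_Cons)
  with Cons.prems(3) obtain a where heads: "tyof (App h s) = tyof (App h' t)"
    and "tyof s = Some a" "tyof t = Some a"
    using tyof_apps_head[OF args(1)] tyof_apps_head[OF args(2)]
    by (auto split: option.splits ty.splits if_splits)
  moreover have "list_all2 (\<lambda>s t. tyof s \<noteq> None \<and> tyof s = tyof t) ss ts'"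
    using Cons.IH[OF args heads] Cons.prems(4) ts by simp
  ultimately show ?case using ts by simp
qed

lemma eval_apps_cong:
  "eval h F I = eval h' F I \<Longrightarrow> list_all2 (\<lambda>s t. eval s F I = eval t F I) ss ts \<Longrightarrow>
   eval (apps h ss) F I = eval (apps h' ts) F I"
proof (induction ss arbitrary: h h' ts)
  case Nil
  then show ?case by (simp add: apps_def)
next
  case (Cons s ss)
  then show ?case by (auto simp: apps_Cons list_all2_Cons1)
qed

lemma eval_in_D:
  assumes "is_asg F I"
  shows "tyof t = Some \<sigma> \<Longrightarrow> eval t F I = Some v \<Longrightarrow> v \<in> D F \<sigma>"
proof (induction t arbitrary: \<sigma> v)
  case (Nm x)
  then show ?case using assms by (auto simp: is_asg_def)
next
  case (App s t)
  then obtain a f c where "tyof s = Some (Fun a \<sigma>)" "tyof t = Some a"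
    "eval s F I = Some f" "eval t F I = Some c" "v = ap F f c"
    by (auto simp del: tyof.simps simp: tyof_App_Some_iff split: option.splits)
  moreover from calculation App.IH have "f \<in> D F (Fun a \<sigma>)" "c \<in> D F a" by blast+
  ultimately show ?case using assms unfolding is_asg_def is_frame_def by blast
next
  case (Lam x s)
  from Lam.prems obtain \<tau> where \<tau>: "tyof s = Some \<tau>" "\<sigma> = Fun (nty x) \<tau>" by auto
  let ?P = "\<lambda>f. f \<in> D F (Fun (nty x) \<tau>) \<and>
    (\<forall>a \<in> D F (nty x). eval s F (I(x := a)) = Some (ap F f a))"
  have ex: "\<exists>f. ?P f" and v: "v = (THE f. ?P f)" using Lam.prems \<tau> by (auto split: if_splits)
  have uniq: "f = g" if "?P f" "?P g" for f g
  proof -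
    have "\<forall>a \<in> D F (nty x). ap F f a = ap F g a" using that by force
    with that assms show ?thesis unfolding is_asg_def is_frame_def by blast
  qed
  have "?P v" unfolding v by (rule theI') (use ex uniq in blast)
  with \<tau> show ?case by simp
qed

lemma eval_cong_frees: "(\<forall>y \<in> frees t. I y = J y) \<Longrightarrow> eval t F I = eval t F J"
proof (induction t arbitrary: I J)
  case (Nm x)
  then show ?case by simp
next
  case (App t1 t2)
  then have "eval t1 F I = eval t1 F J" "eval t2 F I = eval t2 F J" by simp_all
  then show ?case by (simp only: eval.simps)
next
  case (Lam x s)
  then have "eval s F (I(x := a)) = eval s F (J(x := a))" for a by simp
  then show ?case by (simp only: eval.simps)
qed

lemma eval_fun_upd_fresh: "x \<notin> frees s \<Longrightarrow> eval s F (I(x := c)) = eval s F I"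
  by (rule eval_cong_frees) (metis fun_upd_other)

lemma interp_evalE:
  assumes "interp F I" and "tyof t = Some \<sigma>"
  obtains v where "eval t F I = Some v" and "v \<in> D F \<sigma>"
proof -
  from assms obtain v where v: "eval t F I = Some v" unfolding interp_def by blast
  have "is_asg F I" using assms(1) by (simp add: interp_def)
  then have "v \<in> D F \<sigma>" using assms(2) v by (rule eval_in_D)
  with v show thesis by (rule that)
qed

lemma interp_fun_upd:
  assumes "interp F I" and "c \<in> D F (nty y)"
  shows "interp F (I(y := c))"
  unfolding interp_def
proof (intro conjI allI impI)
  show "is_asg F (I(y := c))" using assms by (auto simp: interp_def is_asg_def)
  fix t \<sigma> assume t: "tyof t = Some \<sigma>"
  \<comment> \<open>Totality at \<open>(\<lambda>y. t) y\<close> makes \<open>t\<close> evaluate under every update of \<open>y\<close>.\<close>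
  have "tyof (App (Lam y t) (Nm y)) = Some \<sigma>" using t by simp
  then have "eval (App (Lam y t) (Nm y)) F I \<noteq> None"
    using assms(1) unfolding interp_def by blast
  then obtain f where "eval (Lam y t) F I = Some f" by (auto split: option.splits)
  then have "\<exists>f \<in> D F (Fun (nty y) \<sigma>). \<forall>a \<in> D F (nty y). eval t F (I(y := a)) = Some (ap F f a)"
    using t by (simp split: if_splits)
  then show "eval t F (I(y := c)) \<noteq> None" using assms(2) by force
qed

lemma logical_eval_Ob:
  assumes "logical F I T Fa" and "tyof s = Some Ob"
  shows "eval s F I = Some T \<or> eval s F I = Some Fa"
proof -
  from assms obtain v where "eval s F I = Some v" "v \<in> D F Ob"
    unfolding logical_def by (blast elim: interp_evalE)
  with assms(1) show ?thesis unfolding logical_def by auto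
qed

lemma logical_neg_true:
  assumes "logical F I T Fa" and "tyof s = Some Ob"
  shows "eval (neg s) F I = Some T \<longleftrightarrow> eval s F I = Some Fa"
  using logical_eval_Ob[OF assms] assms(1) unfolding logical_def neg_def by auto

lemma logical_neg_false:
  assumes "logical F I T Fa" and "tyof s = Some Ob"
  shows "eval (neg s) F I = Some Fa \<longleftrightarrow> eval s F I = Some T"
  using logical_eval_Ob[OF assms] assms(1) unfolding logical_def neg_def by auto

lemma logical_eq_true:
  assumes "logical F I T Fa" and "tyof a = Some \<sigma>" and "tyof b = Some \<sigma>"
  shows "eval (eq \<sigma> a b) F I = Some T \<longleftrightarrow> eval a F I = eval b F I"
proof -
  have "interp F I" using assms(1) by (simp add: logical_def)
  then obtain x y where "eval a F I = Some x" "eval b F I = Some y" "x \<in> D F \<sigma>" "y \<in> D F \<sigma>"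
    using assms(2,3) by (meson interp_evalE)
  with assms(1) show ?thesis unfolding logical_def eq_def by auto
qed

lemma logical_neq_true:
  assumes "logical F I T Fa" and "tyof a = Some \<sigma>" and "tyof b = Some \<sigma>"
  shows "eval (neq \<sigma> a b) F I = Some T \<longleftrightarrow> eval a F I \<noteq> eval b F I"
proof -
  have eq: "tyof (eq \<sigma> a b) = Some Ob" using assms(2,3) by (simp add: tyof_eq_Some_iff)
  have "T \<noteq> Fa" using assms(1) by (simp add: logical_def)
  then have "eval (neg (eq \<sigma> a b)) F I = Some T \<longleftrightarrow> eval (eq \<sigma> a b) F I \<noteq> Some T"
    using logical_neg_true[OF assms(1) eq] logical_eval_Ob[OF assms(1) eq] by auto
  with logical_eq_true[OF assms] show ?thesis by (simp add: neq_def)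
qed

lemma logical_fun_upd:
  assumes "logical F I T Fa" and "is_var x" and "c \<in> D F (nty x)"
  shows "logical F (I(x := c)) T Fa"
proof -
  have fixed: "(I(x := c)) Neg = I Neg" "\<And>\<sigma>. (I(x := c)) (EqN \<sigma>) = I (EqN \<sigma>)"
    using assms(2) by (auto simp: is_var_def)
  have "interp F (I(x := c))"
    using assms(1) interp_fun_upd[OF _ assms(3)] by (simp add: logical_def)
  with assms(1) show ?thesis unfolding logical_def fixed by blast
qed

lemma model_fun_upd_fresh:
  assumes "model F I T Fa A" and "is_var x" and "x \<notin> frees_set A" and "c \<in> D F (nty x)"
  shows "model F (I(x := c)) T Fa A"
proof -
  have "eval s F (I(x := c)) = eval s F I" if "s \<in> A" for s
  proof (rule eval_fun_upd_fresh)
    show "x \<notin> frees s" using that assms(3) by (auto simp: frees_set_def)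
  qed
  moreover have "logical F (I(x := c)) T Fa"
    using assms(1) logical_fun_upd[OF _ assms(2,4)] by (simp add: model_def)
  ultimately show ?thesis using assms(1) by (simp add: model_def)
qed

lemma normalizer_tyof_eval:
  fixes F :: "'v frame"
  assumes "is_normalizer TYPE('v) nf" and "interp F I" and "tyof s = Some \<sigma>"
  shows "tyof (nf s) = Some \<sigma>" and "eval (nf s) F I = eval s F I"
  using assms unfolding is_normalizer_def by simp_all

lemma normalizer_eq_true:
  fixes F :: "'v frame"
  assumes "is_normalizer TYPE('v) nf" and "logical F I T Fa"
    and "tyof a = Some \<sigma>" and "tyof b = Some \<sigma>"
  shows "eval (eq \<sigma> (nf a) (nf b)) F I = Some T \<longleftrightarrow> eval a F I = eval b F I"
proof -
  have "interp F I" using assms(2) by (simp add: logical_def)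
  from normalizer_tyof_eval[OF assms(1) this assms(3)]
    and normalizer_tyof_eval[OF assms(1) this assms(4)]
  show ?thesis using logical_eq_true[OF assms(2)] by simp
qed

lemma normalizer_neq_true:
  fixes F :: "'v frame"
  assumes "is_normalizer TYPE('v) nf" and "logical F I T Fa"
    and "tyof a = Some \<sigma>" and "tyof b = Some \<sigma>"
  shows "eval (neq \<sigma> (nf a) (nf b)) F I = Some T \<longleftrightarrow> eval a F I \<noteq> eval b F I"
proof -
  have "interp F I" using assms(2) by (simp add: logical_def)
  from normalizer_tyof_eval[OF assms(1) this assms(3)]
    and normalizer_tyof_eval[OF assms(1) this assms(4)]
  show ?thesis using logical_neq_true[OF assms(2)] by simp
qed

definition some_alternative_true ::
    "'v frame \<Rightarrow> (name \<Rightarrow> 'v) \<Rightarrow> 'v \<Rightarrow> tm set list \<Rightarrow> bool"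
  where "some_alternative_true F I T Ks \<longleftrightarrow> (\<exists>K \<in> set Ks. \<forall>k \<in> K. eval k F I = Some T)"

lemma DN_sound:
  assumes "logical F I T Fa" and "tyof (neg (neg s)) = Some Ob"
    and "eval (neg (neg s)) F I = Some T"
  shows "some_alternative_true F I T [{s}]"
proof -
  from assms(2) have "tyof (neg s) = Some Ob" "tyof s = Some Ob"
    by (simp_all add: tyof_neg_Some_iff)
  with assms(3) have "eval s F I = Some T"
    using logical_neg_true[OF assms(1)] logical_neg_false[OF assms(1)] by simp
  then show ?thesis by (simp add: some_alternative_true_def)
qed

lemma BQ_sound:
  assumes "logical F I T Fa" and "tyof (eq Ob s t) = Some Ob"
    and "eval (eq Ob s t) F I = Some T"
  shows "some_alternative_true F I T [{s, t}, {neg s, neg t}]"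
proof -
  from assms(2) have ty: "tyof s = Some Ob" "tyof t = Some Ob" by (simp_all add: tyof_eq_Some_iff)
  with assms(3) have "eval s F I = eval t F I" using logical_eq_true[OF assms(1)] by blast
  with logical_eval_Ob[OF assms(1) ty(1)] show ?thesis
    using ty by (auto simp: some_alternative_true_def logical_neg_true[OF assms(1)])
qed

lemma BE_sound:
  assumes "logical F I T Fa" and "tyof (neq Ob s t) = Some Ob"
    and "eval (neq Ob s t) F I = Some T"
  shows "some_alternative_true F I T [{s, neg t}, {neg s, t}]"
proof -
  from assms(2) have ty: "tyof s = Some Ob" "tyof t = Some Ob" by (simp_all add: tyof_neq_Some_iff)
  with assms(3) have "eval s F I \<noteq> eval t F I" using logical_neq_true[OF assms(1)] by blast
  with logical_eval_Ob[OF assms(1) ty(1)] logical_eval_Ob[OF assms(1) ty(2)] show ?thesis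
    using ty by (auto simp: some_alternative_true_def logical_neg_true[OF assms(1)])
qed

lemma FQ_sound:
  fixes F :: "'v frame"
  assumes "is_normalizer TYPE('v) nf" and "logical F I T Fa"
    and "tyof (eq (Fun a b) s t) = Some Ob" and "eval (eq (Fun a b) s t) F I = Some T"
    and "tyof u = Some a"
  shows "some_alternative_true F I T [{eq b (nf (App s u)) (nf (App t u))}]"
proof -
  from assms(3) have ty: "tyof s = Some (Fun a b)" "tyof t = Some (Fun a b)"
    by (simp_all add: tyof_eq_Some_iff)
  with assms(4) have "eval s F I = eval t F I" using logical_eq_true[OF assms(2)] by blast
  then have "eval (App s u) F I = eval (App t u) F I" by simp
  with ty assms(5) have "eval (eq b (nf (App s u)) (nf (App t u))) F I = Some T"
    using normalizer_eq_true[OF assms(1,2)] by simp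
  then show ?thesis by (simp add: some_alternative_true_def)
qed

lemma FE_sound:
  fixes F :: "'v frame"
  assumes nf: "is_normalizer TYPE('v) nf" and M: "model F I T Fa A"
    and st: "neq (Fun a b) s t \<in> A" "tyof (neq (Fun a b) s t) = Some Ob"
    and fresh: "Vr n a \<notin> frees_set A"
  shows "\<exists>c. model F (I(Vr n a := c)) T Fa
    (A \<union> {neq b (nf (App s (Nm (Vr n a)))) (nf (App t (Nm (Vr n a))))})"
proof -
  let ?y = "Vr n a"
  have L: "logical F I T Fa" using M by (simp add: model_def)
  then have frame: "is_frame F" and IT: "interp F I"
    by (simp_all add: logical_def interp_def is_asg_def)
  from st(2) have ty: "tyof s = Some (Fun a b)" "tyof t = Some (Fun a b)"
    by (simp_all add: tyof_neq_Some_iff)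
  obtain f g where fg: "eval s F I = Some f" "eval t F I = Some g"
    "f \<in> D F (Fun a b)" "g \<in> D F (Fun a b)"
    using interp_evalE[OF IT ty(1)] interp_evalE[OF IT ty(2)] by metis
  have "f \<noteq> g"
    using M st fg logical_neq_true[OF L ty] by (auto simp: model_def)
  with frame fg(3,4) obtain c where c: "c \<in> D F a" "ap F f c \<noteq> ap F g c"
    unfolding is_frame_def by blast
  have M': "model F (I(?y := c)) T Fa A"
    using model_fun_upd_fresh[OF M _ fresh] c(1) by (simp add: is_var_def)
  then have L': "logical F (I(?y := c)) T Fa" by (simp add: model_def)
  have "?y \<notin> frees s" "?y \<notin> frees t"
    using st(1) fresh by (auto simp: frees_set_def neq_def neg_def eq_def)
  then have "eval (App s (Nm ?y)) F (I(?y := c)) \<noteq> eval (App t (Nm ?y)) F (I(?y := c))"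
    using fg c(2) by (simp add: eval_fun_upd_fresh)
  then have "eval (neq b (nf (App s (Nm ?y))) (nf (App t (Nm ?y)))) F (I(?y := c)) = Some T"
    using normalizer_neq_true[OF nf L'] ty by simp
  with M' show ?thesis by (auto simp: model_def)
qed

lemma eval_apps_differ_at_arg:
  assumes "logical F I T Fa"
    and "tyof (apps h ss) \<noteq> None" and "tyof (apps h ts) \<noteq> None" and "length ss = length ts"
    and "eval (apps h ss) F I \<noteq> eval (apps h ts) F I"
  shows "some_alternative_true F I T (map2 (\<lambda>s t. {neq (the (tyof s)) s t}) ss ts)"
proof -
  have "\<not> list_all2 (\<lambda>s t. eval s F I = eval t F I) ss ts"
    using eval_apps_cong[of h F I h] assms(5) by blast
  moreover have "list_all2 (\<lambda>s t. tyof s \<noteq> None \<and> tyof s = tyof t) ss ts"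
    using tyof_apps_args[OF assms(2,3) refl assms(4)] .
  ultimately obtain s t \<sigma> where st: "(s, t) \<in> set (zip ss ts)" "eval s F I \<noteq> eval t F I"
    "tyof s = Some \<sigma>" "tyof t = Some \<sigma>"
    unfolding list_all2_iff by fastforce
  then have "{neq \<sigma> s t} \<in> set (map2 (\<lambda>s t. {neq (the (tyof s)) s t}) ss ts)"
    by force
  moreover have "eval (neq \<sigma> s t) F I = Some T"
    using st logical_neq_true[OF assms(1)] by blast
  ultimately show ?thesis unfolding some_alternative_true_def by blast
qed

lemma Mat_sound:
  assumes "logical F I T Fa" and "length ss = length ts"
    and "tyof (apps h ss) = Some Ob" and "eval (apps h ss) F I = Some T"
    and "tyof (neg (apps h ts)) = Some Ob" and "eval (neg (apps h ts)) F I = Some T"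
  shows "some_alternative_true F I T (map2 (\<lambda>s t. {neq (the (tyof s)) s t}) ss ts)"
proof (rule eval_apps_differ_at_arg[OF assms(1) _ _ assms(2)])
  from assms(5) have ty: "tyof (apps h ts) = Some Ob" by (simp add: tyof_neg_Some_iff)
  with assms(6) have "eval (apps h ts) F I = Some Fa"
    using logical_neg_true[OF assms(1)] by simp
  with assms(1,4) show "eval (apps h ss) F I \<noteq> eval (apps h ts) F I"
    by (simp add: logical_def)
  from ty assms(3) show "tyof (apps h ss) \<noteq> None" "tyof (apps h ts) \<noteq> None" by simp_all
qed

lemma Dec_sound:
  assumes "logical F I T Fa" and "length ss = length ts"
    and "tyof (neq \<alpha> (apps h ss) (apps h ts)) = Some Ob"
    and "eval (neq \<alpha> (apps h ss) (apps h ts)) F I = Some T"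
  shows "some_alternative_true F I T (map2 (\<lambda>s t. {neq (the (tyof s)) s t}) ss ts)"
proof (rule eval_apps_differ_at_arg[OF assms(1) _ _ assms(2)])
  from assms(3) have ty: "tyof (apps h ss) = Some \<alpha>" "tyof (apps h ts) = Some \<alpha>"
    by (simp_all add: tyof_neq_Some_iff)
  with assms(4) show "eval (apps h ss) F I \<noteq> eval (apps h ts) F I"
    using logical_neq_true[OF assms(1)] by blast
  from ty show "tyof (apps h ss) \<noteq> None" "tyof (apps h ts) \<noteq> None" by simp_all
qed

lemma Con_sound:
  assumes "logical F I T Fa"
    and "tyof (eq \<alpha> s t) = Some Ob" and "eval (eq \<alpha> s t) F I = Some T"
    and "tyof (neq \<alpha> u v) = Some Ob" and "eval (neq \<alpha> u v) F I = Some T"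
  shows "some_alternative_true F I T [{neq \<alpha> s u, neq \<alpha> t u}, {neq \<alpha> s v, neq \<alpha> t v}]"
proof -
  from assms(2,4) have ty: "tyof s = Some \<alpha>" "tyof t = Some \<alpha>" "tyof u = Some \<alpha>" "tyof v = Some \<alpha>"
    by (simp_all add: tyof_eq_Some_iff tyof_neq_Some_iff)
  have "eval s F I = eval t F I" "eval u F I \<noteq> eval v F I"
    using assms(3,5) logical_eq_true[OF assms(1)] logical_neq_true[OF assms(1)] ty by blast+
  then show ?thesis
    using ty by (auto simp: some_alternative_true_def logical_neq_true[OF assms(1)])
qed

lemma inst_sound:
  fixes F :: "'v frame"
  assumes nf: "is_normalizer TYPE('v) nf" and br: "branch nf A" and inst: "inst nf A Ks"
    and M: "model F I T Fa A"
  shows "\<exists>K \<in> set Ks. \<exists>J. model F J T Fa (A \<union> K)"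
proof -
  have L: "logical F I T Fa" and true: "\<And>s. s \<in> A \<Longrightarrow> eval s F I = Some T"
    using M by (simp_all add: model_def)
  have typed: "\<And>s. s \<in> A \<Longrightarrow> tyof s = Some Ob"
    using br by (simp add: branch_def normal_formula_def)
  have extend: "\<exists>K \<in> set Ks. \<exists>J. model F J T Fa (A \<union> K)" if "some_alternative_true F I T Ks"
    using that M by (auto simp: some_alternative_true_def model_def)
  from inst show ?thesis
  proof cases
    case (DN s)
    with DN_sound[OF L typed[OF DN(3)] true[OF DN(3)]]
    show ?thesis by (intro extend) simp
  next
    case (BQ s t)
    with BQ_sound[OF L typed[OF BQ(3)] true[OF BQ(3)]]
    show ?thesis by (intro extend) simp
  next
    case (BE s t)
    with BE_sound[OF L typed[OF BE(3)] true[OF BE(3)]]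
    show ?thesis by (intro extend) simp
  next
    case (FQ a b s t u)
    with FQ_sound[OF nf L typed[OF FQ(3)] true[OF FQ(3)] FQ(4)]
    show ?thesis by (intro extend) simp
  next
    case (FE a b s t n)
    show ?thesis
      unfolding FE(1) using FE_sound[OF nf M FE(3) typed[OF FE(3)] FE(4)]
      by simp (elim exE, rule exI)
  next
    case (Mat ss x ts)
    with Mat_sound[OF L Mat(4) typed[OF Mat(5)] true[OF Mat(5)] typed[OF Mat(6)] true[OF Mat(6)]]
    show ?thesis by (intro extend) simp
  next
    case (Dec ss x a ts)
    with Dec_sound[OF L Dec(5) typed[OF Dec(6)] true[OF Dec(6)]]
    show ?thesis by (intro extend) simp
  next
    case (Con a s t u v)
    with Con_sound[OF L typed[OF Con(4)] true[OF Con(4)] typed[OF Con(5)] true[OF Con(5)]]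
    show ?thesis by (intro extend) simp
  qed
qed

theorem proposition5p1:
  fixes nf :: "tm \<Rightarrow> tm" and A :: "tm set"
  assumes "is_normalizer TYPE('v) nf"
    and "refutable nf A"
  shows "\<not> satisfiable TYPE('v) A"
proof -
  from assms(2) have "\<not> model (F :: 'v frame) I T Fa A" for F I T Fa
  proof (induction arbitrary: I)
    case (1 A Ks)
    show ?case
    proof
      assume "model F I T Fa A"
      with inst_sound[OF assms(1) 1(2,3)] obtain K J
        where "K \<in> set Ks" and "model F J T Fa (A \<union> K)"
        by blast
      with 1(4) show False by blast
    qed
  qed
  then show ?thesis unfolding satisfiable_def by blast
qed

end
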